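(* Let $G=(V(G),E(G))$ be a locally finite, connected weighted graph with the random walk $m^G$ and measure $\nu_G$ defined below, satisfying the standing assumptions below, and let $\Omega\subset V(G)$ be a finite set of vertices with $0<\nu_G(\Omega)<\nu_G(V(G))$. Then $(m^G,\nu_G)$ satisfies a $p$-Poincaré inequality in $\Omega$ for every $p\ge1$.
   Context: Each edge $x\sim y$ has a weight $w_{xy}=w_{yx}>0$, with $w_{xy}=0$ if $x,y$ are not adjacent; locally finite means every vertex has finitely many neighbours; $V(G)$ carries the shortest-path graph distance. $d_x:=\sum_{y\in V(G)}w_{xy}$, $m^G_x:=\frac{1}{d_x}\sum_{y\sim x}w_{xy}\delta_y$, $\nu_G(A):=\sum_{x\in A}d_x$; $\nu_G$ is invariant and reversible for $m^G$. Standing assumption: $\nu_G(V(G))<\infty$. With $m=m^G$, $\nu=\nu_G$: $\partial_m\Omega:=\{x\in V(G)\setminus\Omega: m_x(\Omega)>0\}$, $\Omega_m:=\Omega\cup\partial_m\Omega$; for $u:\Omega\to\mathbb{R}$ and $\psi$ on $\partial_m\Omega$, $u_\psi$ equals $u$ on $\Omega$ and $\psi$ on $\partial_m\Omega$. For $q\ge1$, $(m,\nu)$ satisfies a $q$-Poincaré inequality in $\Omega$ if there is $\lambda>0$ such that $\lambda\int_\Omega|u(x)|^q\,d\nu(x)\le\int_\Omega\int_{\Omega_m}|u_\psi(y)-u(x)|^q\,dm_x(y)\,d\nu(x)+\int_{\partial_m\Omega}|\psi(y)|^q\,d\nu(y)$ for all $u\in L^q(\Omega,\nu)$ and all $\psi\in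 L^q(\partial_m\Omega,\nu)$. *)

theory Defs
  imports "HOL-Analysis.Analysis"
begin

text \<open>A weighted graph on the vertex type 'a (vertex set V(G) = UNIV), given by a weight
function w with w x y = w y x \<ge> 0, and x ~ y iff w x y > 0.\<close>

definition nbrs :: "('a \<Rightarrow> 'a \<Rightarrow> real) \<Rightarrow> 'a \<Rightarrow> 'a set" where
  "nbrs w x = {y. 0 < w x y}"

definition weighted_graph :: "('a \<Rightarrow> 'a \<Rightarrow> real) \<Rightarrow> bool" where
  "weighted_graph w \<longleftrightarrow> (\<forall>x y. w x y = w y x \<and> 0 \<le> w x y)"

definition locally_finite :: "('a \<Rightarrow> 'a \<Rightarrow> real) \<Rightarrow> bool" where
  "locally_finite w \<longleftrightarrow> (\<forall>x. finite (nbrs w x))"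

definition graph_connected :: "('a \<Rightarrow> 'a \<Rightarrow> real) \<Rightarrow> bool" where
  "graph_connected w \<longleftrightarrow> (\<forall>x y. (\<lambda>a b. 0 < w a b)\<^sup>*\<^sup>* x y)"

definition deg :: "('a \<Rightarrow> 'a \<Rightarrow> real) \<Rightarrow> 'a \<Rightarrow> real" where
  "deg w x = (\<Sum>y\<in>nbrs w x. w x y)"

definition nuG :: "('a \<Rightarrow> 'a \<Rightarrow> real) \<Rightarrow> 'a set \<Rightarrow> real" where
  "nuG w A = infsum (deg w) A"

definition mG :: "('a \<Rightarrow> 'a \<Rightarrow> real) \<Rightarrow> 'a \<Rightarrow> 'a set \<Rightarrow> real" where
  "mG w x A = (\<Sum>y\<in>nbrs w x \<inter> A. w x y) / deg w x"

definition mG_int :: "('a \<Rightarrow> 'a \<Rightarrow> real) \<Rightarrow> 'a \<Rightarrow> 'a set \<Rightarrow> ('a \<Rightarrow> real) \<Rightarrow> real" where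
  "mG_int w x A f = (\<Sum>y\<in>nbrs w x \<inter> A. (w x y / deg w x) * f y)"

definition nuG_int :: "('a \<Rightarrow> 'a \<Rightarrow> real) \<Rightarrow> 'a set \<Rightarrow> ('a \<Rightarrow> real) \<Rightarrow> real" where
  "nuG_int w A f = infsum (\<lambda>x. deg w x * f x) A"

definition mboundary :: "('a \<Rightarrow> 'a \<Rightarrow> real) \<Rightarrow> 'a set \<Rightarrow> 'a set" where
  "mboundary w \<Omega> = {x. x \<notin> \<Omega> \<and> 0 < mG w x \<Omega>}"

definition mclosure :: "('a \<Rightarrow> 'a \<Rightarrow> real) \<Rightarrow> 'a set \<Rightarrow> 'a set" where
  "mclosure w \<Omega> = \<Omega> \<union> mboundary w \<Omega>"

definition ext_psi :: "'a set \<Rightarrow> ('a \<Rightarrow> real) \<Rightarrow> ('a \<Rightarrow> real) \<Rightarrow> 'a \<Rightarrow> real" where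
  "ext_psi \<Omega> u \<psi> y = (if y \<in> \<Omega> then u y else \<psi> y)"

text \<open>q-Poincare inequality in Omega for (m^G, nu_G). Membership in L^q is expressed
  as finiteness of the q-th moment (summability of d_x |f x|^q).\<close>
definition poincare_ineq :: "('a \<Rightarrow> 'a \<Rightarrow> real) \<Rightarrow> real \<Rightarrow> 'a set \<Rightarrow> bool" where
  "poincare_ineq w q \<Omega> \<longleftrightarrow> (\<exists>c>0. \<forall>u \<psi>.
     (\<lambda>x. deg w x * \<bar>u x\<bar> powr q) summable_on \<Omega> \<longrightarrow>
     (\<lambda>x. deg w x * \<bar>\<psi> x\<bar> powr q) summable_on (mboundary w \<Omega>) \<longrightarrow>
     c * nuG_int w \<Omega> (\<lambda>x. \<bar>u x\<bar> powr q)
       \<le> nuG_int w \<Omega> (\<lambda>x. mG_int w x (mclosure w \<Omega>)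
                (\<lambda>y. \<bar>ext_psi \<Omega> u \<psi> y - u x\<bar> powr q))
         + nuG_int w (mboundary w \<Omega>) (\<lambda>y. \<bar>\<psi> y\<bar> powr q))"

end

theory Submission
  imports Defs
begin

text \<open>Let \<open>E(u, \<psi>)\<close> be the right-hand side of the Poincare inequality. Every single edge
  term \<open>w x y \<bar>u\<^sub>\<psi> y - u x\<bar>\<^sup>p\<close> and every boundary term \<open>d\<^sub>y \<bar>\<psi> y\<bar>\<^sup>p\<close> is bounded by \<open>E\<close>.
  Hence \<open>\<bar>\<psi>\<bar>\<^sup>p\<close> is controlled by \<open>E\<close> on \<open>\<partial>\<^sub>m\<Omega>\<close>, and by the quasi-triangle inequality
  \<open>\<bar>a\<bar>\<^sup>p \<le> 2\<^sup>p (\<bar>a - b\<bar>\<^sup>p + \<bar>b\<bar>\<^sup>p)\<close> control passes from a vertex to each of its neighbours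
  in \<open>\<Omega>\<close>. Since the graph is connected and \<open>\<Omega>\<close> is a proper subset, every vertex of \<open>\<Omega>\<close> is
  joined to \<open>\<partial>\<^sub>m\<Omega>\<close> by a path inside \<open>\<Omega>\<close>, so \<open>\<bar>u x\<bar>\<^sup>p \<le> K\<^sub>x E\<close> for all \<open>x \<in> \<Omega>\<close>; summing over
  the finite set \<open>\<Omega>\<close> gives the inequality.\<close>

lemma deg_nonneg: "weighted_graph w \<Longrightarrow> 0 \<le> deg w x"
  unfolding deg_def weighted_graph_def by (simp add: sum_nonneg)

lemma weight_le_deg:
  assumes "locally_finite w" "0 < w x y"
  shows "w x y \<le> deg w x"
  unfolding deg_def
proof (rule member_le_sum)
  show "y \<in> nbrs w x" using assms(2) by (simp add: nbrs_def)
  show "finite (nbrs w x)" using assms(1) by (simp add: locally_finite_def)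
qed (simp add: nbrs_def)

lemma deg_mult_mG_int:
  assumes "locally_finite w"
  shows "deg w x * mG_int w x A f = (\<Sum>y\<in>nbrs w x \<inter> A. w x y * f y)"
proof (cases "nbrs w x \<inter> A = {}")
  case True
  then show ?thesis by (simp add: mG_int_def)
next
  case False
  then obtain y where "0 < w x y" by (auto simp: nbrs_def)
  then have "deg w x \<noteq> 0" using weight_le_deg[OF assms] by force
  then show ?thesis by (simp add: mG_int_def sum_distrib_left)
qed

lemma nuG_int_finite: "finite A \<Longrightarrow> nuG_int w A f = (\<Sum>x\<in>A. deg w x * f x)"
  by (simp add: nuG_int_def)

lemma finite_mboundary:
  assumes "weighted_graph w" "locally_finite w" "finite \<Omega>"
  shows "finite (mboundary w \<Omega>)"
proof (rule finite_subset)
  show "mboundary w \<Omega> \<subseteq> (\<Union>x\<in>\<Omega>. nbrs w x)"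
  proof
    fix y assume "y \<in> mboundary w \<Omega>"
    then have "nbrs w y \<inter> \<Omega> \<noteq> {}" by (auto simp: mboundary_def mG_def)
    then show "y \<in> (\<Union>x\<in>\<Omega>. nbrs w x)"
      using assms(1) by (auto simp: nbrs_def weighted_graph_def)
  qed
  show "finite (\<Union>x\<in>\<Omega>. nbrs w x)" using assms(2,3) by (simp add: locally_finite_def)
qed

lemma mem_mboundaryI:
  assumes "weighted_graph w" "locally_finite w" "x \<in> \<Omega>" "0 < w x y" "y \<notin> \<Omega>"
  shows "y \<in> mboundary w \<Omega>"
proof -
  have wyx: "0 < w y x" using assms(1,4) by (simp add: weighted_graph_def)
  have "w y x \<le> (\<Sum>v\<in>nbrs w y \<inter> \<Omega>. w y v)"
  proof (rule member_le_sum)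
    show "x \<in> nbrs w y \<inter> \<Omega>" using wyx assms(3) by (simp add: nbrs_def)
    show "finite (nbrs w y \<inter> \<Omega>)" using assms(2) by (simp add: locally_finite_def)
  qed (simp add: nbrs_def)
  moreover have "w y x \<le> deg w y" using weight_le_deg[OF assms(2) wyx] .
  ultimately have "0 < mG w y \<Omega>" using wyx by (simp add: mG_def)
  then show ?thesis using assms(5) by (simp add: mboundary_def)
qed

definition poincare_energy ::
    "('a \<Rightarrow> 'a \<Rightarrow> real) \<Rightarrow> real \<Rightarrow> 'a set \<Rightarrow> ('a \<Rightarrow> real) \<Rightarrow> ('a \<Rightarrow> real) \<Rightarrow> real" where
  "poincare_energy w q \<Omega> u \<psi> =
     nuG_int w \<Omega> (\<lambda>x. mG_int w x (mclosure w \<Omega>) (\<lambda>y. \<bar>ext_psi \<Omega> u \<psi> y - u x\<bar> powr q))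
     + nuG_int w (mboundary w \<Omega>) (\<lambda>y. \<bar>\<psi> y\<bar> powr q)"

lemma poincare_ineqI:
  assumes "\<And>u \<psi>. 0 \<le> poincare_energy w q \<Omega> u \<psi>"
    and "\<And>u \<psi>. nuG_int w \<Omega> (\<lambda>x. \<bar>u x\<bar> powr q) \<le> C * poincare_energy w q \<Omega> u \<psi>"
  shows "poincare_ineq w q \<Omega>"
  unfolding poincare_ineq_def poincare_energy_def[symmetric]
proof (intro exI[of _ "1 / (1 + \<bar>C\<bar>)"] conjI allI impI)
  fix u \<psi>
  have "C * poincare_energy w q \<Omega> u \<psi> \<le> (1 + \<bar>C\<bar>) * poincare_energy w q \<Omega> u \<psi>"
    using assms(1)[of u \<psi>] by (intro mult_right_mono) auto
  with assms(2)[of u \<psi>]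
  show "1 / (1 + \<bar>C\<bar>) * nuG_int w \<Omega> (\<lambda>x. \<bar>u x\<bar> powr q) \<le> poincare_energy w q \<Omega> u \<psi>"
    by (simp add: field_simps)
qed simp

lemma poincare_energy_finite:
  assumes "weighted_graph w" "locally_finite w" "finite \<Omega>"
  shows "poincare_energy w q \<Omega> u \<psi> =
    (\<Sum>x\<in>\<Omega>. \<Sum>y\<in>nbrs w x \<inter> mclosure w \<Omega>. w x y * \<bar>ext_psi \<Omega> u \<psi> y - u x\<bar> powr q)
    + (\<Sum>y\<in>mboundary w \<Omega>. deg w y * \<bar>\<psi> y\<bar> powr q)"
  using assms finite_mboundary[OF assms]
  by (simp add: poincare_energy_def nuG_int_finite deg_mult_mG_int)

lemma
  assumes "weighted_graph w" "locally_finite w" "finite \<Omega>"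
  shows poincare_energy_nonneg: "0 \<le> poincare_energy w q \<Omega> u \<psi>"
    and edge_term_le_poincare_energy:
      "\<lbrakk>x \<in> \<Omega>; 0 < w x y; y \<in> mclosure w \<Omega>\<rbrakk> \<Longrightarrow>
         w x y * \<bar>ext_psi \<Omega> u \<psi> y - u x\<bar> powr q \<le> poincare_energy w q \<Omega> u \<psi>"
    and boundary_term_le_poincare_energy:
      "y \<in> mboundary w \<Omega> \<Longrightarrow> deg w y * \<bar>\<psi> y\<bar> powr q \<le> poincare_energy w q \<Omega> u \<psi>"
proof -
  define a where "a x y = w x y * \<bar>ext_psi \<Omega> u \<psi> y - u x\<bar> powr q" for x y
  define A where "A x = (\<Sum>y\<in>nbrs w x \<inter> mclosure w \<Omega>. a x y)" for x
  define B where "B y = deg w y * \<bar>\<psi> y\<bar> powr q" for y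
  have E: "poincare_energy w q \<Omega> u \<psi> = sum A \<Omega> + sum B (mboundary w \<Omega>)"
    unfolding A_def B_def a_def using poincare_energy_finite[OF assms] .
  have fin_nbrs: "finite (nbrs w x \<inter> mclosure w \<Omega>)" for x
    using assms(2) by (simp add: locally_finite_def)
  have a_nonneg: "y \<in> nbrs w x \<Longrightarrow> 0 \<le> a x y" for x y by (simp add: a_def nbrs_def)
  have A_nonneg: "0 \<le> A x" for x unfolding A_def by (intro sum_nonneg a_nonneg) simp
  have B_nonneg: "0 \<le> B y" for y unfolding B_def using deg_nonneg[OF assms(1)] by simp
  have sumA: "0 \<le> sum A \<Omega>" and sumB: "0 \<le> sum B (mboundary w \<Omega>)"
    by (simp_all add: sum_nonneg A_nonneg B_nonneg)
  show "0 \<le> poincare_energy w q \<Omega> u \<psi>" unfolding E using sumA sumB by simp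
  show "a x y \<le> poincare_energy w q \<Omega> u \<psi>"
    if "x \<in> \<Omega>" "0 < w x y" "y \<in> mclosure w \<Omega>" for x y
  proof -
    have "a x y \<le> A x" unfolding A_def
      using that fin_nbrs by (intro member_le_sum a_nonneg) (auto simp: nbrs_def)
    also have "\<dots> \<le> sum A \<Omega>" using that assms(3) by (intro member_le_sum A_nonneg)
    finally show ?thesis unfolding E using sumB by simp
  qed
  show "B y \<le> poincare_energy w q \<Omega> u \<psi>" if "y \<in> mboundary w \<Omega>" for y
    using member_le_sum[of y "mboundary w \<Omega>" B] that B_nonneg finite_mboundary[OF assms] sumA
    unfolding E by simp
qed

lemma abs_powr_le_two_powr:
  fixes a b p :: real
  assumes "0 \<le> p"
  shows "\<bar>a\<bar> powr p \<le> 2 powr p * (\<bar>a - b\<bar> powr p + \<bar>b\<bar> powr p)"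
proof -
  let ?m = "max \<bar>a - b\<bar> \<bar>b\<bar>"
  have "\<bar>a\<bar> powr p \<le> (2 * ?m) powr p"
    using assms by (intro powr_mono2) (auto simp: max_def abs_if)
  also have "\<dots> = 2 powr p * ?m powr p" by (simp add: powr_mult)
  also have "?m powr p \<le> \<bar>a - b\<bar> powr p + \<bar>b\<bar> powr p" by (simp add: max_def)
  finally show ?thesis by (simp add: mult_left_mono)
qed

definition energy_controlled :: "('a \<Rightarrow> 'a \<Rightarrow> real) \<Rightarrow> real \<Rightarrow> 'a set \<Rightarrow> 'a \<Rightarrow> bool" where
  "energy_controlled w q \<Omega> y \<longleftrightarrow>
     (\<exists>K. \<forall>u \<psi>. \<bar>ext_psi \<Omega> u \<psi> y\<bar> powr q \<le> K * poincare_energy w q \<Omega> u \<psi>)"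

lemma energy_controlled_mboundary:
  assumes "weighted_graph w" "locally_finite w" "finite \<Omega>" "y \<in> mboundary w \<Omega>"
  shows "energy_controlled w q \<Omega> y"
  unfolding energy_controlled_def
proof (intro exI[of _ "1 / deg w y"] allI)
  fix u \<psi>
  have "deg w y \<noteq> 0" using assms(4) by (auto simp: mboundary_def mG_def)
  then have "0 < deg w y" using deg_nonneg[OF assms(1), of y] by linarith
  moreover have "ext_psi \<Omega> u \<psi> y = \<psi> y" using assms(4) by (simp add: ext_psi_def mboundary_def)
  ultimately show "\<bar>ext_psi \<Omega> u \<psi> y\<bar> powr q \<le> 1 / deg w y * poincare_energy w q \<Omega> u \<psi>"
    using boundary_term_le_poincare_energy[OF assms(1-4)] by (simp add: field_simps)
qed

lemma energy_controlled_step: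
  assumes "weighted_graph w" "locally_finite w" "finite \<Omega>" "0 \<le> q"
    and "x \<in> \<Omega>" "0 < w x y" "y \<in> mclosure w \<Omega>" "energy_controlled w q \<Omega> y"
  shows "energy_controlled w q \<Omega> x"
proof -
  obtain K where K: "\<And>u \<psi>. \<bar>ext_psi \<Omega> u \<psi> y\<bar> powr q \<le> K * poincare_energy w q \<Omega> u \<psi>"
    using assms(8) by (auto simp: energy_controlled_def)
  show ?thesis
    unfolding energy_controlled_def
  proof (intro exI[of _ "2 powr q * (1 / w x y + K)"] allI)
    fix u \<psi>
    let ?v = "ext_psi \<Omega> u \<psi> y" and ?E = "poincare_energy w q \<Omega> u \<psi>"
    have "w x y * \<bar>?v - u x\<bar> powr q \<le> ?E"
      using edge_term_le_poincare_energy[OF assms(1-3,5-7)] .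
    then have edge: "\<bar>u x - ?v\<bar> powr q \<le> 1 / w x y * ?E"
      using assms(6) by (simp add: abs_minus_commute field_simps)
    have "\<bar>u x\<bar> powr q \<le> 2 powr q * (\<bar>u x - ?v\<bar> powr q + \<bar>?v\<bar> powr q)"
      using abs_powr_le_two_powr[OF assms(4)] .
    also have "\<dots> \<le> 2 powr q * (1 / w x y * ?E + K * ?E)"
      using edge K by (intro mult_left_mono add_mono) auto
    finally show "\<bar>ext_psi \<Omega> u \<psi> x\<bar> powr q \<le> 2 powr q * (1 / w x y + K) * ?E"
      using assms(5) by (simp add: ext_psi_def algebra_simps)
  qed
qed

text \<open>The first vertex outside \<open>\<Omega>\<close> on a path starting in \<open>\<Omega>\<close> lies in \<open>\<partial>\<^sub>m\<Omega>\<close>.\<close>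

lemma energy_controlled_if_path_leaves:
  assumes "weighted_graph w" "locally_finite w" "finite \<Omega>" "0 \<le> q"
    and "(\<lambda>a b. 0 < w a b)\<^sup>*\<^sup>* x z" "z \<notin> \<Omega>" "x \<in> \<Omega>"
  shows "energy_controlled w q \<Omega> x"
  using assms(5,7)
proof (induction rule: converse_rtranclp_induct)
  case base
  then show ?case using assms(6) by simp
next
  case (step x y)
  have "y \<in> mclosure w \<Omega> \<and> energy_controlled w q \<Omega> y"
  proof (cases "y \<in> \<Omega>")
    case True
    then show ?thesis using step.IH by (simp add: mclosure_def)
  next
    case False
    then have "y \<in> mboundary w \<Omega>" by (rule mem_mboundaryI[OF assms(1,2) step.prems step.hyps(1)])
    then show ?thesis using energy_controlled_mboundary[OF assms(1-3)] by (simp add: mclosure_def)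
  qed
  then show ?case using energy_controlled_step[OF assms(1-4) step.prems step.hyps(1)] by blast
qed

theorem mainTheorem13:
  fixes w :: "'a \<Rightarrow> 'a \<Rightarrow> real" and \<Omega> :: "'a set" and p :: real
  assumes "weighted_graph w"
    and "locally_finite w"
    and "graph_connected w"
    and "deg w summable_on UNIV"
    and "finite \<Omega>"
    and "0 < nuG w \<Omega>"
    and "nuG w \<Omega> < nuG w UNIV"
    and "1 \<le> p"
  shows "poincare_ineq w p \<Omega>"
proof -
  note graph = assms(1,2,5)
  have "\<Omega> \<noteq> UNIV" using assms(7) by auto
  then obtain z where "z \<notin> \<Omega>" by blast
  then have "energy_controlled w p \<Omega> x" if "x \<in> \<Omega>" for x
    using energy_controlled_if_path_leaves[OF graph] assms(3,8) that
    by (simp add: graph_connected_def)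
  then obtain K where K: "\<And>x u \<psi>. x \<in> \<Omega> \<Longrightarrow> \<bar>u x\<bar> powr p \<le> K x * poincare_energy w p \<Omega> u \<psi>"
    unfolding energy_controlled_def ext_psi_def by metis
  show ?thesis
  proof (rule poincare_ineqI[OF poincare_energy_nonneg[OF graph]])
    fix u \<psi>
    have "nuG_int w \<Omega> (\<lambda>x. \<bar>u x\<bar> powr p) \<le> (\<Sum>x\<in>\<Omega>. deg w x * (K x * poincare_energy w p \<Omega> u \<psi>))"
      unfolding nuG_int_finite[OF assms(5)]
      by (intro sum_mono mult_left_mono K deg_nonneg[OF assms(1)])
    then show "nuG_int w \<Omega> (\<lambda>x. \<bar>u x\<bar> powr p)
        \<le> (\<Sum>x\<in>\<Omega>. deg w x * K x) * poincare_energy w p \<Omega> u \<psi>"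
      by (simp add: sum_distrib_right mult.assoc)
  qed
qed

end
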